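(* Let $n\ge 2$, and let $S$ be a semitransitive subsemigroup of $\mathcal{I}_n\setminus\mathcal{S}_n$ with $|S|\le 2n$. Then $S$ contains exactly two non-zero idempotents. Their domains are disjoint, and the union of their domains is $X=\{1,\dots,n\}$.
   Context: $\mathcal{I}_n$ denotes the symmetric inverse semigroup of all partial injective maps of $X=\{1,\dots,n\}$ to itself (including the empty map, denoted $0$), with maps written on the right ($x\varphi$) and composed left to right ($x(\varphi\psi)=(x\varphi)\psi$). $\mathcal{S}_n$ is the symmetric group of all permutations of $X$, so $\mathcal{I}_n\setminus\mathcal{S}_n$ is the set of non-invertible partial injections. A semigroup $S$ of partial transformations of $X$ is semitransitive if for all $x,y\in X$ there is $\varphi\in S$ with $x\varphi=y$ or $y\varphi=x$. An idempotent is non-zero if it is not the empty map. *)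

theory Defs
  imports Main
begin

definition pinj :: "nat \<Rightarrow> (nat \<rightharpoonup> nat) \<Rightarrow> bool" where
  "pinj n f \<longleftrightarrow> dom f \<subseteq> {1..n} \<and> ran f \<subseteq> {1..n} \<and> inj_on f (dom f)"

definition symInv :: "nat \<Rightarrow> (nat \<rightharpoonup> nat) set" where
  "symInv n = {f. pinj n f}"

definition symGrp :: "nat \<Rightarrow> (nat \<rightharpoonup> nat) set" where
  "symGrp n = {f \<in> symInv n. dom f = {1..n} \<and> ran f = {1..n}}"

text \<open>Composition with maps written on the right: x(f g) = (x f) g.\<close>
definition pmul :: "(nat \<rightharpoonup> nat) \<Rightarrow> (nat \<rightharpoonup> nat) \<Rightarrow> (nat \<rightharpoonup> nat)" where
  "pmul f g = g \<circ>\<^sub>m f"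

definition subsemigroup_of :: "(nat \<rightharpoonup> nat) set \<Rightarrow> (nat \<rightharpoonup> nat) set \<Rightarrow> bool" where
  "subsemigroup_of S T \<longleftrightarrow> S \<subseteq> T \<and> (\<forall>f\<in>S. \<forall>g\<in>S. pmul f g \<in> S)"

definition semitransitive :: "nat \<Rightarrow> (nat \<rightharpoonup> nat) set \<Rightarrow> bool" where
  "semitransitive n S \<longleftrightarrow>
     (\<forall>x\<in>{1..n}. \<forall>y\<in>{1..n}. \<exists>f\<in>S. f x = Some y \<or> f y = Some x)"

definition nonzero_idempotents :: "(nat \<rightharpoonup> nat) set \<Rightarrow> (nat \<rightharpoonup> nat) set" where
  "nonzero_idempotents S = {e \<in> S. pmul e e = e \<and> e \<noteq> Map.empty}"

end

theory Submission
  imports Defs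
begin

(*
  Idempotents of I_n are partial identities pid A, so the statement is about the family
  of sets A with pid A in S, called idem_domains below.  The proof has three ingredients.

  (1) Every element s of the finite semigroup S has an idempotent power, a partial identity
      on a subset of dom s that contains every fixed point of s.  Hence the idempotent domains
      cover X = {1..n} (apply this to an s fixing a given point, which exists by
      semitransitivity), none of them is X itself (S avoids S_n), and an idempotent of
      minimal rank forces the empty map into S.
  (2) Counting: if pid A and pid F lie in S, A is nonempty, F is not contained in A and
      A \<union> F \<noteq> X, then X splits into three nonempty blocks B1 = A, B2 = F - A,
      B3 = X - (A \<union> F).  Restricting elements of S by pid A and pid F produces six
      pairwise disjoint families of non-zero elements of S, of sizes at least
      |B1|, |B2|, |B3| ("loops" inside a block) and |B1|, |B3|, |B2| ("links" between two
      blocks); together with the empty map this gives |S| \<ge> 2n + 1.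
  (3) So if |S| \<le> 2n, any two idempotent domains are either nested or cover X; since
      domains are closed under non-empty intersection, distinct ones are complementary,
      and the covering property yields exactly two of them.
*)

definition pid :: "nat set \<Rightarrow> (nat \<rightharpoonup> nat)" where
  "pid A = (\<lambda>t. if t \<in> A then Some t else None)"

definition has_arrow :: "(nat \<rightharpoonup> nat) \<Rightarrow> nat set \<Rightarrow> nat set \<Rightarrow> bool" where
  "has_arrow s P Q \<longleftrightarrow> (\<exists>a\<in>P. \<exists>b\<in>Q. s a = Some b)"

text \<open>An arrow from \<open>P\<close> to \<open>Q\<close> witnesses that the domain meets \<open>P\<close> and the range meets \<open>Q\<close>;
  this reduces all disjointness arguments below to reasoning about sets.\<close>

lemma arrow_meets: "has_arrow s P Q \<Longrightarrow> dom s \<inter> P \<noteq> {} \<and> ran s \<inter> Q \<noteq> {}"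
  unfolding has_arrow_def by (blast intro: ranI)

lemma pmul_apply: "pmul f g x = (case f x of None \<Rightarrow> None | Some y \<Rightarrow> g y)"
  by (simp add: pmul_def map_comp_def)

lemma pmul_Some: "f x = Some y \<Longrightarrow> pmul f g x = g y"
  by (simp add: pmul_apply)

lemma dom_pmul: "dom (pmul f g) \<subseteq> dom f"
  by (auto simp: pmul_apply split: option.splits)

lemma ran_pmul: "ran (pmul f g) \<subseteq> ran g"
  by (auto simp: pmul_apply ran_def split: option.splits)

lemma pmul_assoc: "pmul (pmul f g) h = pmul f (pmul g h)"
  by (rule ext) (simp add: pmul_apply split: option.splits)

lemma dom_pid [simp]: "dom (pid A) = A"
  by (auto simp: pid_def dom_def)

lemma ran_pid [simp]: "ran (pid A) = A"
  by (auto simp: pid_def ran_def)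

lemma pid_pmul_pid: "pmul (pid A) (pid B) = pid (A \<inter> B)"
  by (rule ext) (simp add: pmul_apply pid_def)

lemma pid_pmul: "pmul (pid A) s = s |` A"
  by (rule ext) (simp add: pmul_apply pid_def restrict_map_def)

lemma pmul_pid_Some: "s x = Some y \<Longrightarrow> y \<in> B \<Longrightarrow> pmul s (pid B) x = Some y"
  by (simp add: pmul_apply pid_def)

lemma pid_pmul_Some: "x \<in> A \<Longrightarrow> s x = Some y \<Longrightarrow> pmul (pid A) s x = Some y"
  by (simp add: pid_pmul)

lemma dom_pid_pmul: "dom (pmul (pid A) s) \<subseteq> A"
  by (simp add: pid_pmul)

lemma corner_Some:
  "x \<in> A \<Longrightarrow> s x = Some y \<Longrightarrow> y \<in> B \<Longrightarrow> pmul (pmul (pid A) s) (pid B) x = Some y"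
  by (simp add: pid_pmul_Some pmul_pid_Some)

lemma dom_corner: "dom (pmul (pmul (pid A) s) (pid B)) \<subseteq> A"
  using dom_pmul dom_pid_pmul by blast

lemma ran_pmul_pid: "ran (pmul s (pid B)) \<subseteq> B"
  using ran_pmul[of s "pid B"] by simp

lemma pmul_pid_SomeD: "pmul s (pid B) x = Some y \<Longrightarrow> s x = Some y \<and> y \<in> B"
  by (auto simp: pmul_apply pid_def split: option.splits if_splits)

lemma idempotent_eq_pid:
  assumes inj: "inj_on e (dom e)" and idem: "pmul e e = e"
  shows "e = pid (dom e)"
proof (rule ext)
  fix t
  show "e t = pid (dom e) t"
  proof (cases "e t")
    case None
    then show ?thesis by (simp add: pid_def domIff)
  next
    case (Some u)
    have "e u = Some u" using idem Some pmul_Some[of e t u e, OF Some] by simp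
    then have "t = u" using inj_onD[OF inj, of t u] Some by (auto simp: dom_def)
    then show ?thesis using Some by (simp add: pid_def dom_def)
  qed
qed

text \<open>Positive powers: \<open>pw s k\<close> is \<open>s\<close> raised to the power \<open>k + 1\<close>.\<close>

primrec pw :: "(nat \<rightharpoonup> nat) \<Rightarrow> nat \<Rightarrow> (nat \<rightharpoonup> nat)" where
  "pw s 0 = s"
| "pw s (Suc k) = pmul (pw s k) s"

lemma pw_add: "pmul (pw s i) (pw s j) = pw s (i + j + 1)"
  by (induction j) (simp_all flip: pmul_assoc)

lemma pw_fix: "s x = Some x \<Longrightarrow> pw s k x = Some x"
  by (induction k) (simp_all add: pmul_Some)

lemma dom_pw: "dom (pw s k) \<subseteq> dom s"
proof (induction k)
  case (Suc k)
  then show ?case using dom_pmul[of "pw s k" s] by simp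
qed simp

lemma pw_closed: "s \<in> T \<Longrightarrow> \<forall>f\<in>T. \<forall>g\<in>T. pmul f g \<in> T \<Longrightarrow> pw s k \<in> T"
  by (induction k) simp_all

lemma pw_shift:
  assumes "pw s a = pw s (a + p)"
  shows "pw s (a + p + u) = pw s (a + u)"
  using assms by (induction u) (simp_all add: add.assoc[symmetric])

lemma pw_periodic:
  assumes "pw s a = pw s (a + p)"
  shows "pw s (a + t + q * p) = pw s (a + t)"
proof (induction q)
  case (Suc q)
  have "pw s (a + t + Suc q * p) = pw s (a + p + (t + q * p))"
    by (simp add: algebra_simps)
  also have "\<dots> = pw s (a + (t + q * p))" by (rule pw_shift[OF assms])
  finally show ?case using Suc by (simp add: add.assoc)
qed simp

text \<open>In a finite set of partial maps closed under composition, every element has an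
  idempotent power: if \<open>s\<^sup>a = s\<^sup>a\<^sup>+\<^sup>p\<close>, then \<open>s\<^sup>m\<close> is idempotent for any multiple \<open>m \<ge> a\<close> of \<open>p\<close>.\<close>

lemma idempotent_power:
  assumes fin: "finite T" and s: "s \<in> T" and closed: "\<forall>f\<in>T. \<forall>g\<in>T. pmul f g \<in> T"
  shows "\<exists>k. pmul (pw s k) (pw s k) = pw s k"
proof -
  have "pw s ` {0..card T} \<subseteq> T" using pw_closed[OF s closed] by auto
  then have "card (pw s ` {0..card T}) \<le> card T" by (rule card_mono[OF fin])
  then have "\<not> inj_on (pw s) {0..card T}" by (auto dest: card_image)
  then obtain i j where "pw s i = pw s j" "i \<noteq> j" unfolding inj_on_def by blast
  then obtain a b where "pw s a = pw s b" "a < b" by (metis linorder_neqE_nat)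
  then have "pw s a = pw s (a + (b - a))" and "b - a \<ge> 1" by simp_all
  then obtain p where period: "pw s a = pw s (a + p)" and p: "p \<ge> 1" by blast
  define k where "k = p * Suc a - 1"
  have "Suc a \<le> p * Suc a" using mult_le_mono1[OF p, of "Suc a"] by simp
  then have Sk: "Suc k = p * Suc a" and ka: "a \<le> k" by (simp_all add: k_def)
  have "pmul (pw s k) (pw s k) = pw s (k + k + 1)" by (rule pw_add)
  also have "k + k + 1 = a + (k - a) + Suc a * p" using ka Sk by (simp add: mult.commute)
  also have "pw s (a + (k - a) + Suc a * p) = pw s (a + (k - a))" by (rule pw_periodic[OF period])
  also have "a + (k - a) = k" using ka by simp
  finally show ?thesis by blast
qed

lemma finite_maps_into:
  assumes "finite A" "finite B"
  shows "finite {m :: nat \<rightharpoonup> nat. dom m \<subseteq> A \<and> ran m \<subseteq> B}"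
proof -
  have "{m :: nat \<rightharpoonup> nat. dom m \<subseteq> A \<and> ran m \<subseteq> B} = (\<Union>D\<in>Pow A. {m. dom m = D \<and> ran m \<subseteq> B})"
    by auto
  then show ?thesis
    using assms by (auto intro!: finite_set_of_finite_maps intro: finite_subset)
qed

lemma card_le_images_of_point:
  assumes "finite W" and "\<forall>t\<in>B. \<exists>w\<in>W. w b = Some t"
  shows "card B \<le> card W"
proof -
  have "B \<subseteq> (\<lambda>w. the (w b)) ` W" using assms(2) by force
  then show ?thesis
    by (meson assms(1) card_image_le card_mono finite_imageI order_trans)
qed

text \<open>If every point \<open>a\<close> of \<open>P\<close> is linked to a fixed point \<open>b \<in> Q\<close> (in either direction) by some
  injective map in \<open>K\<close>, and no map in \<open>K\<close> carries arrows both from \<open>P\<close> to \<open>Q\<close> and from \<open>Q\<close> to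
  \<open>P\<close>, then \<open>K\<close> has at least \<open>|P|\<close> elements: the linking map determines \<open>a\<close>.\<close>

lemma card_le_one_way_links:
  assumes fin: "finite K" and b: "b \<in> Q"
    and inj: "\<forall>k\<in>K. inj_on k (dom k)"
    and one_way: "\<forall>k\<in>K. \<not> has_arrow k P Q \<or> \<not> has_arrow k Q P"
    and link: "\<forall>a\<in>P. \<exists>k\<in>K. k a = Some b \<or> k b = Some a"
  shows "card P \<le> card K"
proof -
  obtain wit where wit: "\<forall>a\<in>P. wit a \<in> K \<and> (wit a a = Some b \<or> wit a b = Some a)"
    using bchoice[OF link[unfolded Bex_def]] by blast
  have "inj_on wit P"
  proof (rule inj_onI)
    fix a a' assume a: "a \<in> P" and a': "a' \<in> P" and eq: "wit a = wit a'"
    define k where "k = wit a"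
    have kK: "k \<in> K" and ka: "k a = Some b \<or> k b = Some a"
      using wit a by (simp_all add: k_def)
    have ka': "k a' = Some b \<or> k b = Some a'" using wit a' eq by (simp add: k_def)
    consider (out) "k a = Some b" "k a' = Some b" | (into) "k b = Some a" "k b = Some a'"
      | (both) "has_arrow k P Q" "has_arrow k Q P"
      using ka ka' a a' b unfolding has_arrow_def by blast
    then show "a = a'"
    proof cases
      case out
      then show ?thesis using inj kK by (metis domI inj_onD)
    next
      case into
      then show ?thesis by simp
    next
      case both
      then show ?thesis using one_way kK by blast
    qed
  qed
  moreover have "wit ` P \<subseteq> K" using wit by blast
  ultimately show ?thesis using card_inj_on_le[OF _ _ fin] by blast
qed

text \<open>A partial injection mapping a finite set \<open>D\<close> into itself permutes \<open>D\<close>, so every preimage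
  of a point of \<open>D\<close> lies in \<open>D\<close>.\<close>

lemma invariant_set_preimage:
  assumes fin: "finite D" and inj: "inj_on g (dom g)"
    and inv: "\<forall>t\<in>D. \<exists>u\<in>D. g t = Some u"
    and gw: "g w = Some z" and z: "z \<in> D"
  shows "w \<in> D"
proof -
  have D_dom: "D \<subseteq> dom g" using inv by blast
  have "g ` D \<subseteq> Some ` D" using inv by force
  moreover have "card (g ` D) = card (Some ` D)"
    using inj_on_subset[OF inj D_dom] by (simp add: card_image)
  ultimately have "g ` D = Some ` D" using card_subset_eq[of "Some ` D" "g ` D"] fin by blast
  then obtain z' where z': "z' \<in> D" "g z' = Some z" using z by (metis imageE image_eqI)
  then show "w \<in> D" using inj_onD[OF inj, of z' w] D_dom gw by auto
qed

locale proper_semitransitive =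
  fixes n :: nat and S :: "(nat \<rightharpoonup> nat) set"
  assumes base_nonempty: "n \<ge> 1"
    and subsemigroup: "subsemigroup_of S (symInv n - symGrp n)"
    and semitransitive: "semitransitive n S"
begin

lemma closed: "f \<in> S \<Longrightarrow> g \<in> S \<Longrightarrow> pmul f g \<in> S"
  using subsemigroup by (simp add: subsemigroup_of_def)

lemma member_pinj: "f \<in> S \<Longrightarrow> dom f \<subseteq> {1..n} \<and> ran f \<subseteq> {1..n} \<and> inj_on f (dom f)"
  using subsemigroup by (auto simp: subsemigroup_of_def symInv_def pinj_def)

lemma not_permutation: "f \<in> S \<Longrightarrow> \<not> (dom f = {1..n} \<and> ran f = {1..n})"
  using subsemigroup by (auto simp: subsemigroup_of_def symGrp_def symInv_def)

lemma link: "x \<in> {1..n} \<Longrightarrow> y \<in> {1..n} \<Longrightarrow> \<exists>f\<in>S. f x = Some y \<or> f y = Some x"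
  using semitransitive by (simp add: semitransitive_def)

lemma finite_S: "finite S"
proof -
  have "S \<subseteq> {m. dom m \<subseteq> {1..n} \<and> ran m \<subseteq> {1..n}}" using member_pinj by blast
  then show ?thesis by (rule finite_subset) (simp add: finite_maps_into)
qed

lemma idempotent_is_pid: "e \<in> S \<Longrightarrow> pmul e e = e \<Longrightarrow> e = pid (dom e)"
  using idempotent_eq_pid member_pinj by blast

lemma pid_proper: "pid A \<in> S \<Longrightarrow> A \<subseteq> {1..n} \<and> A \<noteq> {1..n}"
  using member_pinj[of "pid A"] not_permutation[of "pid A"] by simp

lemma idempotent_below:
  assumes "s \<in> S"
  shows "\<exists>A. pid A \<in> S \<and> A \<subseteq> dom s \<and> {x. s x = Some x} \<subseteq> A"
proof -
  obtain k where idem: "pmul (pw s k) (pw s k) = pw s k"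
    using idempotent_power[OF finite_S assms] closed by blast
  have "pw s k \<in> S" using pw_closed[OF assms] closed by blast
  then have "pw s k = pid (dom (pw s k))" using idem idempotent_is_pid by blast
  moreover have "{x. s x = Some x} \<subseteq> dom (pw s k)" using pw_fix by blast
  ultimately show ?thesis using \<open>pw s k \<in> S\<close> dom_pw by metis
qed

text \<open>By semitransitivity, every finite \<open>B \<subseteq> X\<close> has a point from which \<open>S\<close> reaches all of \<open>B\<close>
  (induction on \<open>B\<close>: a new point either reaches the old source or is reached by it).\<close>

lemma common_source:
  assumes "finite B" "B \<noteq> {}" "B \<subseteq> {1..n}"
  shows "\<exists>b\<in>B. \<forall>t\<in>B. \<exists>s\<in>S. s b = Some t"
  using assms
proof (induction B rule: finite_ne_induct)
  case (singleton x)
  then show ?case using link[of x x] by auto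
next
  case (insert x F)
  then obtain b where b: "b \<in> F" "\<forall>t\<in>F. \<exists>s\<in>S. s b = Some t" by auto
  have x: "x \<in> {1..n}" and "b \<in> {1..n}" using insert b by auto
  then obtain f where f: "f \<in> S" "f x = Some b \<or> f b = Some x" using link by blast
  show ?case
  proof (cases "f x = Some b")
    case True
    have "\<exists>s\<in>S. s x = Some t" if t: "t \<in> insert x F" for t
    proof (cases "t = x")
      case True
      then show ?thesis using link[OF x x] by auto
    next
      case False
      then obtain s where s: "s \<in> S" "s b = Some t" using b t by auto
      then have "pmul f s x = Some t" using \<open>f x = Some b\<close> by (simp add: pmul_Some)
      then show ?thesis using closed[OF f(1) s(1)] by blast
    qed
    then show ?thesis by blast
  next
    case False
    then show ?thesis using b f by auto
  qed
qed

lemma card_le_loops: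
  assumes "B \<subseteq> {1..n}" "B \<noteq> {}" "W \<subseteq> S"
    and restrict: "\<And>s b t. s \<in> S \<Longrightarrow> b \<in> B \<Longrightarrow> t \<in> B \<Longrightarrow> s b = Some t \<Longrightarrow> \<exists>w\<in>W. w b = Some t"
  shows "card B \<le> card W"
proof -
  have "finite B" using assms(1) finite_subset by blast
  then obtain b where b: "b \<in> B" and source: "\<forall>t\<in>B. \<exists>s\<in>S. s b = Some t"
    using common_source assms(1,2) by blast
  have "finite W" using assms(3) finite_S finite_subset by blast
  moreover have "\<forall>t\<in>B. \<exists>w\<in>W. w b = Some t"
  proof
    fix t assume t: "t \<in> B"
    then obtain s where "s \<in> S" "s b = Some t" using source by blast
    then show "\<exists>w\<in>W. w b = Some t" using restrict b t by blast
  qed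
  ultimately show ?thesis by (rule card_le_images_of_point)
qed

lemma card_le_links:
  assumes "P \<subseteq> {1..n}" "b \<in> Q" "b \<in> {1..n}" "K \<subseteq> S"
    and one_way: "\<forall>k\<in>K. \<not> has_arrow k P Q \<or> \<not> has_arrow k Q P"
    and outward: "\<And>s a. s \<in> S \<Longrightarrow> a \<in> P \<Longrightarrow> s a = Some b \<Longrightarrow> \<exists>k\<in>K. k a = Some b"
    and inward: "\<And>s a. s \<in> S \<Longrightarrow> a \<in> P \<Longrightarrow> s b = Some a \<Longrightarrow> \<exists>k\<in>K. k b = Some a"
  shows "card P \<le> card K"
proof (rule card_le_one_way_links)
  show "finite K" using assms(4) finite_S finite_subset by blast
  show "\<forall>k\<in>K. inj_on k (dom k)" using assms(4) member_pinj by blast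
  show "\<forall>a\<in>P. \<exists>k\<in>K. k a = Some b \<or> k b = Some a"
  proof
    fix a assume a: "a \<in> P"
    then obtain s where "s \<in> S" "s a = Some b \<or> s b = Some a" using link assms(1,3) by blast
    then show "\<exists>k\<in>K. k a = Some b \<or> k b = Some a" using outward inward a by blast
  qed
qed (use assms(2) one_way in auto)

text \<open>An idempotent of minimal rank exists, and every element of \<open>S\<close> maps its domain \<open>D\<close>
  into \<open>D\<close>: the corner \<open>pid D \<cdot> g \<cdot> pid D\<close> has domain inside \<open>D\<close> and rank at least \<open>|D|\<close>.\<close>

lemma minimal_idempotent: "\<exists>D. pid D \<in> S \<and> (\<forall>g\<in>S. card D \<le> card (dom g))"
proof -
  obtain f where "f \<in> S" using link[of 1 1] base_nonempty by auto
  then obtain s where s: "s \<in> S" and min: "\<forall>g\<in>S. card (dom s) \<le> card (dom g)"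
    using ex_has_least_nat[of "\<lambda>s. s \<in> S" f "\<lambda>s. card (dom s)"] by blast
  obtain D where D: "pid D \<in> S" "D \<subseteq> dom s" using idempotent_below[OF s] by blast
  have "finite (dom s)" using member_pinj[OF s] finite_subset by blast
  then have "card D \<le> card (dom s)" using D(2) card_mono by blast
  then show ?thesis using D(1) min order_trans by blast
qed

lemma minimal_idempotent_invariant:
  assumes D: "pid D \<in> S" and min: "\<forall>g\<in>S. card D \<le> card (dom g)"
    and g: "g \<in> S" and t: "t \<in> D"
  shows "\<exists>u\<in>D. g t = Some u"
proof -
  let ?h = "pmul (pmul (pid D) g) (pid D)"
  have "finite D" using pid_proper[OF D] finite_subset by blast
  moreover have "dom ?h \<subseteq> D" by (rule dom_corner)
  moreover have "card D \<le> card (dom ?h)" using min closed[OF closed[OF D g] D] by blast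
  ultimately have "dom ?h = D" using card_seteq by blast
  then obtain u where "?h t = Some u" using t by blast
  then have "pmul (pid D) g t = Some u" and "u \<in> D" using pmul_pid_SomeD by blast+
  then show ?thesis using t by (simp add: pid_pmul)
qed

text \<open>Hence \<open>S\<close> contains the empty map: a minimal idempotent domain \<open>D \<noteq> {}, X\<close> would be
  invariant under \<open>S\<close>, yet semitransitivity links a point outside \<open>D\<close> to a point inside.\<close>

lemma zero_in_S: "Map.empty \<in> S"
proof -
  obtain D where D: "pid D \<in> S" and min: "\<forall>g\<in>S. card D \<le> card (dom g)"
    using minimal_idempotent by blast
  show ?thesis
  proof (cases "D = {}")
    case True
    then show ?thesis using D by (simp add: pid_def)
  next
    case False
    then obtain z where z: "z \<in> D" by blast
    have DX: "D \<subseteq> {1..n}" and "D \<noteq> {1..n}" using pid_proper[OF D] by simp_all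
    then obtain w where w: "w \<in> {1..n}" "w \<notin> D" by blast
    obtain g where g: "g \<in> S" "g z = Some w \<or> g w = Some z" using link z DX w(1) by blast
    have inv: "\<forall>t\<in>D. \<exists>u\<in>D. g t = Some u"
      using minimal_idempotent_invariant[OF D min g(1)] by blast
    then have "g w = Some z" using g(2) z w(2) by force
    then have "w \<in> D"
      using invariant_set_preimage[OF _ _ inv _ z] DX finite_subset member_pinj[OF g(1)] by blast
    then show ?thesis using w(2) by blast
  qed
qed

definition idem_domains :: "nat set set" where
  "idem_domains = {A. A \<noteq> {} \<and> pid A \<in> S}"

lemma nonzero_idempotents_eq: "nonzero_idempotents S = pid ` idem_domains"
proof
  show "nonzero_idempotents S \<subseteq> pid ` idem_domains"
  proof
    fix e assume "e \<in> nonzero_idempotents S"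
    then have e: "e \<in> S" "pmul e e = e" "e \<noteq> Map.empty" by (simp_all add: nonzero_idempotents_def)
    then have "e = pid (dom e)" using idempotent_is_pid by blast
    moreover have "dom e \<noteq> {}" using e(3) by simp
    ultimately show "e \<in> pid ` idem_domains" using e(1) unfolding idem_domains_def by force
  qed
next
  show "pid ` idem_domains \<subseteq> nonzero_idempotents S"
    by (auto simp: idem_domains_def nonzero_idempotents_def pid_pmul_pid dest: arg_cong[of _ _ dom])
qed

lemma idem_domain_proper: "A \<in> idem_domains \<Longrightarrow> A \<subseteq> {1..n} \<and> A \<noteq> {1..n}"
  using pid_proper by (simp add: idem_domains_def)

lemma idem_domains_cover:
  assumes "x \<in> {1..n}"
  shows "\<exists>A\<in>idem_domains. x \<in> A"
proof -
  obtain s where "s \<in> S" "s x = Some x" using link[OF assms assms] by blast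
  then obtain A where "pid A \<in> S" "x \<in> A" using idempotent_below by blast
  then show ?thesis unfolding idem_domains_def by blast
qed

lemma idem_domains_Int:
  "A \<in> idem_domains \<Longrightarrow> B \<in> idem_domains \<Longrightarrow> A \<inter> B \<noteq> {} \<Longrightarrow> A \<inter> B \<in> idem_domains"
  using closed[of "pid A" "pid B"] by (simp add: idem_domains_def pid_pmul_pid)

end

locale three_blocks = proper_semitransitive +
  fixes B1 B2 B3 F :: "nat set"
  assumes pid_B1: "pid B1 \<in> S" and pid_F: "pid F \<in> S"
    and F_between: "B2 \<subseteq> F" "F \<subseteq> B1 \<union> B2"
    and nonempty: "B1 \<noteq> {}" "B2 \<noteq> {}" "B3 \<noteq> {}"
    and disjoint: "B1 \<inter> B2 = {}" "B1 \<inter> B3 = {}" "B2 \<inter> B3 = {}"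
    and blocks_cover: "B1 \<union> B2 \<union> B3 = {1..n}"
begin

definition loops1 where
  "loops1 = {s \<in> S. dom s \<subseteq> B1 \<and> ran s \<subseteq> B1 \<and> has_arrow s B1 B1}"

definition loops2 where
  "loops2 = {s \<in> S. dom s \<subseteq> F \<and> ran s \<subseteq> F \<and> has_arrow s B2 B2}"

definition loops3 where
  "loops3 = {s \<in> S. has_arrow s B3 B3}"

definition links12 where
  "links12 = {s \<in> S. dom s \<subseteq> B1 \<and> ran s \<subseteq> F \<and> has_arrow s B1 B2
                   \<or> dom s \<subseteq> F \<and> ran s \<subseteq> B1 \<and> has_arrow s B2 B1}"

definition links13 where
  "links13 = {s \<in> S. dom s \<subseteq> B1 \<and> has_arrow s B1 B3 \<or> ran s \<subseteq> B1 \<and> has_arrow s B3 B1}"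

definition links23 where
  "links23 = {s \<in> S. dom s \<subseteq> F \<and> has_arrow s B2 B3
                   \<or> ran s \<subseteq> F \<and> has_arrow s B3 B2}"

lemmas family_defs = loops1_def loops2_def loops3_def links12_def links13_def links23_def

lemma blocks_in_base: "B1 \<subseteq> {1..n}" "B2 \<subseteq> {1..n}" "B3 \<subseteq> {1..n}"
  using blocks_cover by blast+

text \<open>Each family is large: corners of elements of \<open>S\<close> by \<open>pid B1\<close> and \<open>pid F\<close> keep the relevant
  arrows and land in the family.\<close>

lemma card_loops1: "card B1 \<le> card loops1"
proof (rule card_le_loops)
  show "\<exists>w\<in>loops1. w b = Some t" if "s \<in> S" "b \<in> B1" "t \<in> B1" "s b = Some t" for s b t
  proof
    let ?w = "pmul (pmul (pid B1) s) (pid B1)"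
    show "?w b = Some t" using that corner_Some by blast
    then show "?w \<in> loops1" unfolding loops1_def has_arrow_def
      using closed[OF closed[OF pid_B1 that(1)] pid_B1] dom_corner ran_pmul_pid that(2,3) by blast
  qed
qed (use blocks_in_base nonempty in \<open>auto simp: loops1_def\<close>)

lemma card_loops2: "card B2 \<le> card loops2"
proof (rule card_le_loops)
  show "\<exists>w\<in>loops2. w b = Some t" if "s \<in> S" "b \<in> B2" "t \<in> B2" "s b = Some t" for s b t
  proof
    let ?w = "pmul (pmul (pid F) s) (pid F)"
    show "?w b = Some t" using that F_between corner_Some by blast
    then show "?w \<in> loops2" unfolding loops2_def has_arrow_def
      using closed[OF closed[OF pid_F that(1)] pid_F] dom_corner ran_pmul_pid that(2,3) F_between by blast
  qed
qed (use blocks_in_base nonempty in \<open>auto simp: loops2_def\<close>)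

lemma card_loops3: "card B3 \<le> card loops3"
proof (rule card_le_loops)
  show "\<exists>w\<in>loops3. w b = Some t" if "s \<in> S" "b \<in> B3" "t \<in> B3" "s b = Some t" for s b t
    using that unfolding loops3_def has_arrow_def by blast
qed (use blocks_in_base nonempty in \<open>auto simp: loops3_def\<close>)

lemma card_links12: "card B1 \<le> card links12"
proof -
  obtain b where b: "b \<in> B2" using nonempty by blast
  show ?thesis
  proof (rule card_le_links[OF _ b])
    show "\<exists>k\<in>links12. k a = Some b" if "s \<in> S" "a \<in> B1" "s a = Some b" for s a
    proof
      let ?k = "pmul (pmul (pid B1) s) (pid F)"
      show "?k a = Some b" using that b F_between corner_Some by blast
      then show "?k \<in> links12" unfolding links12_def has_arrow_def
        using closed[OF closed[OF pid_B1 that(1)] pid_F] dom_corner ran_pmul_pid that(2) b F_between by blast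
    qed
    show "\<exists>k\<in>links12. k b = Some a" if "s \<in> S" "a \<in> B1" "s b = Some a" for s a
    proof
      let ?k = "pmul (pmul (pid F) s) (pid B1)"
      show "?k b = Some a" using that b F_between corner_Some by blast
      then show "?k \<in> links12" unfolding links12_def has_arrow_def
        using closed[OF closed[OF pid_F that(1)] pid_B1] dom_corner ran_pmul_pid that(2) b F_between by blast
    qed
    show "\<forall>k\<in>links12. \<not> has_arrow k B1 B2 \<or> \<not> has_arrow k B2 B1"
      unfolding links12_def using disjoint(1) F_between by (blast dest!: arrow_meets)
  qed (use blocks_in_base b in \<open>auto simp: links12_def\<close>)
qed

lemma card_links13: "card B3 \<le> card links13"
proof -
  obtain b where b: "b \<in> B1" using nonempty by blast
  show ?thesis
  proof (rule card_le_links[OF _ b])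
    show "\<exists>k\<in>links13. k a = Some b" if "s \<in> S" "a \<in> B3" "s a = Some b" for s a
    proof
      let ?k = "pmul s (pid B1)"
      show "?k a = Some b" using that b pmul_pid_Some by blast
      then show "?k \<in> links13" unfolding links13_def has_arrow_def
        using closed[OF that(1) pid_B1] ran_pmul_pid that(2) b by blast
    qed
    show "\<exists>k\<in>links13. k b = Some a" if "s \<in> S" "a \<in> B3" "s b = Some a" for s a
    proof
      let ?k = "pmul (pid B1) s"
      show "?k b = Some a" using that b pid_pmul_Some by blast
      then show "?k \<in> links13" unfolding links13_def has_arrow_def
        using closed[OF pid_B1 that(1)] dom_pid_pmul that(2) b by blast
    qed
    show "\<forall>k\<in>links13. \<not> has_arrow k B3 B1 \<or> \<not> has_arrow k B1 B3"
      unfolding links13_def using disjoint(2) by (blast dest!: arrow_meets)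
  qed (use blocks_in_base b in \<open>auto simp: links13_def\<close>)
qed

lemma card_links23: "card B2 \<le> card links23"
proof -
  obtain b where b: "b \<in> B3" using nonempty by blast
  show ?thesis
  proof (rule card_le_links[OF _ b])
    show "\<exists>k\<in>links23. k a = Some b" if "s \<in> S" "a \<in> B2" "s a = Some b" for s a
    proof
      let ?k = "pmul (pid F) s"
      show "?k a = Some b" using that F_between pid_pmul_Some by blast
      then show "?k \<in> links23" unfolding links23_def has_arrow_def
        using closed[OF pid_F that(1)] dom_pid_pmul that(2) b F_between by blast
    qed
    show "\<exists>k\<in>links23. k b = Some a" if "s \<in> S" "a \<in> B2" "s b = Some a" for s a
    proof
      let ?k = "pmul s (pid F)"
      show "?k b = Some a" using that F_between pmul_pid_Some by blast
      then show "?k \<in> links23" unfolding links23_def has_arrow_def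
        using closed[OF that(1) pid_F] ran_pmul_pid that(2) b F_between by blast
    qed
    show "\<forall>k\<in>links23. \<not> has_arrow k B2 B3 \<or> \<not> has_arrow k B3 B2"
      unfolding links23_def using disjoint F_between by (blast dest!: arrow_meets)
  qed (use blocks_in_base b in \<open>auto simp: links23_def\<close>)
qed


lemma families_disjoint:
  "loops1 \<inter> loops2 = {}" "loops1 \<inter> loops3 = {}" "loops1 \<inter> links12 = {}"
  "loops1 \<inter> links13 = {}" "loops1 \<inter> links23 = {}" "loops2 \<inter> loops3 = {}"
  "loops2 \<inter> links12 = {}" "loops2 \<inter> links13 = {}" "loops2 \<inter> links23 = {}"
  "loops3 \<inter> links12 = {}" "loops3 \<inter> links13 = {}" "loops3 \<inter> links23 = {}"
  "links12 \<inter> links13 = {}" "links12 \<inter> links23 = {}" "links13 \<inter> links23 = {}"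
  unfolding family_defs using disjoint F_between by (blast dest!: arrow_meets)+

lemma zero_not_in_families:
  "Map.empty \<notin> loops1" "Map.empty \<notin> loops2" "Map.empty \<notin> loops3"
  "Map.empty \<notin> links12" "Map.empty \<notin> links13" "Map.empty \<notin> links23"
  by (simp_all add: family_defs has_arrow_def)

theorem card_S_lower_bound: "2 * n + 1 \<le> card S"
proof -
  let ?U = "{Map.empty} \<union> loops1 \<union> loops2 \<union> loops3 \<union> links12 \<union> links13 \<union> links23"
  have fin: "finite loops1" "finite loops2" "finite loops3"
    "finite links12" "finite links13" "finite links23"
    using finite_S by (simp_all add: family_defs)
  have "card ?U = 1 + card loops1 + card loops2 + card loops3
                    + card links12 + card links13 + card links23"
    using fin families_disjoint zero_not_in_families
    by (simp add: card_Un_disjoint Int_Un_distrib2)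
  moreover have "?U \<subseteq> S" using zero_in_S by (auto simp: family_defs)
  ultimately have "1 + card loops1 + card loops2 + card loops3
                    + card links12 + card links13 + card links23 \<le> card S"
    using card_mono[OF finite_S] by metis
  moreover have "card B1 + card B2 + card B3 = card (B1 \<union> B2 \<union> B3)"
  proof -
    have "finite B1" "finite B2" "finite B3"
      using blocks_in_base by (meson finite_atLeastAtMost finite_subset)+
    then show ?thesis using disjoint by (simp add: card_Un_disjoint Int_Un_distrib2)
  qed
  moreover have "card (B1 \<union> B2 \<union> B3) = n" using blocks_cover by simp
  ultimately show ?thesis
    using card_loops1 card_loops2 card_loops3 card_links12 card_links13 card_links23 by linarith
qed

end

context proper_semitransitive
begin

lemma crossing_domains_bound:
  assumes A: "A \<in> idem_domains" and F: "F \<in> idem_domains"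
    and not_sub: "\<not> F \<subseteq> A" and not_cover: "A \<union> F \<noteq> {1..n}"
  shows "2 * n + 1 \<le> card S"
proof -
  have "A \<union> F \<subseteq> {1..n}" using idem_domain_proper A F by blast
  then interpret three_blocks n S A "F - A" "{1..n} - (A \<union> F)" F
    using A F not_sub not_cover by unfold_locales (auto simp: idem_domains_def)
  show ?thesis by (rule card_S_lower_bound)
qed

end

locale small_semitransitive = proper_semitransitive +
  assumes small: "card S \<le> 2 * n"
begin

lemma domains_union:
  "A \<in> idem_domains \<Longrightarrow> B \<in> idem_domains \<Longrightarrow> \<not> B \<subseteq> A \<Longrightarrow> A \<union> B = {1..n}"
  using crossing_domains_bound small by fastforce

text \<open>If \<open>B \<not>\<subseteq> A\<close> and \<open>A \<inter> B \<noteq> {}\<close>, then \<open>A \<inter> B\<close> is a domain, and applying the union property to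
  it would make \<open>A\<close> or \<open>B\<close> equal to \<open>X\<close>.\<close>

lemma domains_disjoint:
  assumes A: "A \<in> idem_domains" and B: "B \<in> idem_domains" and not_sub: "\<not> B \<subseteq> A"
  shows "A \<inter> B = {}"
proof (rule ccontr)
  assume meet: "A \<inter> B \<noteq> {}"
  then have AB: "A \<inter> B \<in> idem_domains" using idem_domains_Int A B by blast
  show False
  proof (cases "A \<subseteq> B")
    case True
    then have "B = {1..n}" using domains_union[OF A B not_sub] by blast
    then show False using idem_domain_proper[OF B] by blast
  next
    case False
    then have "(A \<inter> B) \<union> A = {1..n}" using domains_union[OF AB A] by blast
    then show False using idem_domain_proper[OF A] by blast
  qed
qed

lemma distinct_domains_complementary:
  assumes "A \<in> idem_domains" "B \<in> idem_domains" "A \<noteq> B"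
  shows "A \<inter> B = {} \<and> A \<union> B = {1..n}"
proof (cases "B \<subseteq> A")
  case True
  then have "\<not> A \<subseteq> B" using assms(3) by blast
  then show ?thesis using domains_union[OF assms(2,1)] domains_disjoint[OF assms(2,1)] by blast
next
  case False
  then show ?thesis using domains_union[OF assms(1,2)] domains_disjoint[OF assms(1,2)] by blast
qed

text \<open>There are exactly two idempotent domains: pick a domain \<open>A\<close>, a domain \<open>B\<close> containing a
  point outside \<open>A\<close>; any third domain would be disjoint from the complementary pair.\<close>

lemma idem_domains_pair:
  "\<exists>A B. A \<noteq> B \<and> idem_domains = {A, B} \<and> A \<inter> B = {} \<and> A \<union> B = {1..n}"
proof -
  obtain A where A: "A \<in> idem_domains" using idem_domains_cover[of 1] base_nonempty by auto
  then obtain y where y: "y \<in> {1..n}" "y \<notin> A" using idem_domain_proper by blast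
  then obtain B where B: "B \<in> idem_domains" "y \<in> B" using idem_domains_cover by blast
  then have "A \<noteq> B" using y(2) by blast
  then have AB: "A \<inter> B = {} \<and> A \<union> B = {1..n}"
    using distinct_domains_complementary A B(1) by blast
  have "C \<in> {A, B}" if C: "C \<in> idem_domains" for C
  proof (rule ccontr)
    assume "C \<notin> {A, B}"
    then have "C \<inter> A = {}" "C \<inter> B = {}" using distinct_domains_complementary C A B(1) by auto
    moreover have "C \<subseteq> {1..n}" "C \<noteq> {}" using C idem_domain_proper by (auto simp: idem_domains_def)
    ultimately show False using AB by blast
  qed
  then have "idem_domains = {A, B}" using A B(1) by blast
  then show ?thesis using \<open>A \<noteq> B\<close> AB by blast
qed

end

theorem lemma2p1:
  fixes n :: nat and S :: "(nat \<rightharpoonup> nat) set"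
  assumes "n \<ge> 2"
    and "subsemigroup_of S (symInv n - symGrp n)"
    and "semitransitive n S"
    and "card S \<le> 2 * n"
  shows "\<exists>e1 e2. e1 \<noteq> e2 \<and> nonzero_idempotents S = {e1, e2}
           \<and> dom e1 \<inter> dom e2 = {} \<and> dom e1 \<union> dom e2 = {1..n}"
proof -
  interpret small_semitransitive n S
    using assms by unfold_locales simp_all
  obtain A B where "A \<noteq> B" "idem_domains = {A, B}" "A \<inter> B = {}" "A \<union> B = {1..n}"
    using idem_domains_pair by blast
  then have "pid A \<noteq> pid B" by (metis dom_pid)
  moreover have "nonzero_idempotents S = {pid A, pid B}"
    using nonzero_idempotents_eq \<open>idem_domains = {A, B}\<close> by simp
  ultimately show ?thesis using \<open>A \<inter> B = {}\<close> \<open>A \<union> B = {1..n}\<close>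
    by (intro exI[of _ "pid A"] exI[of _ "pid B"]) simp
qed

end
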